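(* Fix subgroups $s\neq s'$, a cohort $g\in\{1,\dots,\mathcal T\}$ and $t$ with $g\le t\le\mathcal T$, and assume all potential outcomes are integrable and $P(G=g,S=\sigma)>0$ for $\sigma\in\{s,s'\}$. Suppose (No subgroup selection) $$\mathbb E[Y_t(g;s')-Y_t(\infty;s')\mid G=g,S=s]=\mathbb E[Y_t(g;s')-Y_t(\infty;s')\mid G=g,S=s'].$$ Then $CDATT_{s-s'}(g,t)=DATT_{s-s'}(g,t)$. Consequently, if in addition the hypotheses of part (a) (resp. (b)) below hold, then $CDATT_{s-s'}(g,t)$ equals $$\mathbb E[Y_t-Y_{g-1}\mid G=g,S=s]-\mathbb E[Y_t-Y_{g-1}\mid G=g,S=s']-\Big(\mathbb E[Y_t-Y_{g-1}\mid C,S=s]-\mathbb E[Y_t-Y_{g-1}\mid C,S=s']\Big),$$ where $C$ is the event $\{G>t\}$ (resp. $\{G=\infty\}$), assumed to satisfy $P(C,S=\sigma)>0$ for $\sigma\in\{s,s'\}$. The hypotheses are: (i) for every finite cohort $g'$, every $\tau<g'$ and every $\sigma$ with $P(G=g',S=\sigma)>0$, $\mathbb E[Y_\tau(g')\mid G=g',S=\sigma]=\mathbb E[Y_\tau(\infty)\mid G=g',S=\sigma]$; and (ii) $\mathbb E[Y_t(\infty)-Y_{g-1}(\infty)\mid G=g,S=s]-\mathbb E[Y_t(\infty)-Y_{g-1}(\infty)\mid G=g,S=s']=\mathbb E[Y_t(\infty)-Y_{g-1}(\infty)\mid C,S=s]-\mathbb E[Y_t(\infty)-Y_{g-1}(\infty)\mid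 C,S=s']$.
   Context: Time periods are $t=0,1,\dots,\mathcal T$; $\mathcal S$ is a finite set of subgroups. A unit is described by a random element consisting of: $G\in\{1,\dots,\mathcal T\}\cup\{\infty\}$, the first period in which the unit is treated ($G=\infty$ means never treated; treatment is irreversible); a subgroup $S\in\mathcal S$; covariates $X$; and real potential outcomes $Y_t(g';\sigma)$ for every period $t$, every possible cohort $g'$ (including $\infty$) and every $\sigma\in\mathcal S$, interpreted as the outcome at $t$ had the unit first been treated at $g'$ and belonged to subgroup $\sigma$. Write $Y_t(g'):=Y_t(g';S)$ and the observed outcome $Y_t:=Y_t(G;S)$. Units are i.i.d. (panel data). Define $$DATT_{s-s'}(g,t):=\mathbb E[Y_t(g)-Y_t(\infty)\mid G=g,S=s]-\mathbb E[Y_t(g)-Y_t(\infty)\mid G=g,S=s'],$$ $$CDATT_{s-s'}(g,t):=\mathbb E[Y_t(g;s)-Y_t(\infty;s)\mid G=g,S=s]-\mathbb E[Y_t(g;s')-Y_t(\infty;s')\mid G=g,S=s].$$ *)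

theory Defs
  imports "HOL-Probability.Probability" "HOL-Library.Extended_Nat"
begin

text \<open>Cohorts are elements of enat: a finite cohort is enat g, never treated is infinity.
Potential outcomes: Y t g' sigma x is Y_t(g';sigma) evaluated at the outcome x.\<close>

definition ev :: "'a measure \<Rightarrow> ('a \<Rightarrow> bool) \<Rightarrow> 'a set" where
  "ev M P = {x \<in> space M. P x}"

definition cexp :: "'a measure \<Rightarrow> ('a \<Rightarrow> bool) \<Rightarrow> ('a \<Rightarrow> real) \<Rightarrow> real" where
  "cexp M P Z = (LINT x:ev M P|M. Z x) / measure M (ev M P)"

definition obsY :: "('a \<Rightarrow> enat) \<Rightarrow> ('a \<Rightarrow> 's) \<Rightarrow> (nat \<Rightarrow> enat \<Rightarrow> 's \<Rightarrow> 'a \<Rightarrow> real) \<Rightarrow> nat \<Rightarrow> 'a \<Rightarrow> real" where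
  "obsY G S Y t x = Y t (G x) (S x) x"

definition DATT :: "'a measure \<Rightarrow> ('a \<Rightarrow> enat) \<Rightarrow> ('a \<Rightarrow> 's) \<Rightarrow> (nat \<Rightarrow> enat \<Rightarrow> 's \<Rightarrow> 'a \<Rightarrow> real)
    \<Rightarrow> 's \<Rightarrow> 's \<Rightarrow> nat \<Rightarrow> nat \<Rightarrow> real" where
  "DATT M G S Y s s' g t =
     cexp M (\<lambda>x. G x = enat g \<and> S x = s) (\<lambda>x. Y t (enat g) (S x) x - Y t \<infinity> (S x) x)
   - cexp M (\<lambda>x. G x = enat g \<and> S x = s') (\<lambda>x. Y t (enat g) (S x) x - Y t \<infinity> (S x) x)"

definition CDATT :: "'a measure \<Rightarrow> ('a \<Rightarrow> enat) \<Rightarrow> ('a \<Rightarrow> 's) \<Rightarrow> (nat \<Rightarrow> enat \<Rightarrow> 's \<Rightarrow> 'a \<Rightarrow> real)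
    \<Rightarrow> 's \<Rightarrow> 's \<Rightarrow> nat \<Rightarrow> nat \<Rightarrow> real" where
  "CDATT M G S Y s s' g t =
     cexp M (\<lambda>x. G x = enat g \<and> S x = s) (\<lambda>x. Y t (enat g) s x - Y t \<infinity> s x)
   - cexp M (\<lambda>x. G x = enat g \<and> S x = s) (\<lambda>x. Y t (enat g) s' x - Y t \<infinity> s' x)"

definition DDD :: "'a measure \<Rightarrow> ('a \<Rightarrow> enat) \<Rightarrow> ('a \<Rightarrow> 's) \<Rightarrow> (nat \<Rightarrow> enat \<Rightarrow> 's \<Rightarrow> 'a \<Rightarrow> real)
    \<Rightarrow> 's \<Rightarrow> 's \<Rightarrow> nat \<Rightarrow> nat \<Rightarrow> ('a \<Rightarrow> bool) \<Rightarrow> real" where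
  "DDD M G S Y s s' g t C =
     cexp M (\<lambda>x. G x = enat g \<and> S x = s) (\<lambda>x. obsY G S Y t x - obsY G S Y (g - 1) x)
   - cexp M (\<lambda>x. G x = enat g \<and> S x = s') (\<lambda>x. obsY G S Y t x - obsY G S Y (g - 1) x)
   - (cexp M (\<lambda>x. C x \<and> S x = s) (\<lambda>x. obsY G S Y t x - obsY G S Y (g - 1) x)
      - cexp M (\<lambda>x. C x \<and> S x = s') (\<lambda>x. obsY G S Y t x - obsY G S Y (g - 1) x))"

definition hyp_i :: "'a measure \<Rightarrow> ('a \<Rightarrow> enat) \<Rightarrow> ('a \<Rightarrow> 's) \<Rightarrow> (nat \<Rightarrow> enat \<Rightarrow> 's \<Rightarrow> 'a \<Rightarrow> real)
    \<Rightarrow> nat \<Rightarrow> bool" where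
  "hyp_i M G S Y T \<longleftrightarrow>
     (\<forall>g'. 1 \<le> g' \<and> g' \<le> T \<longrightarrow> (\<forall>\<tau> < g'. \<forall>\<sigma>.
        measure M (ev M (\<lambda>x. G x = enat g' \<and> S x = \<sigma>)) > 0 \<longrightarrow>
        cexp M (\<lambda>x. G x = enat g' \<and> S x = \<sigma>) (\<lambda>x. Y \<tau> (enat g') (S x) x)
        = cexp M (\<lambda>x. G x = enat g' \<and> S x = \<sigma>) (\<lambda>x. Y \<tau> \<infinity> (S x) x)))"

definition hyp_ii :: "'a measure \<Rightarrow> ('a \<Rightarrow> enat) \<Rightarrow> ('a \<Rightarrow> 's) \<Rightarrow> (nat \<Rightarrow> enat \<Rightarrow> 's \<Rightarrow> 'a \<Rightarrow> real)
    \<Rightarrow> 's \<Rightarrow> 's \<Rightarrow> nat \<Rightarrow> nat \<Rightarrow> ('a \<Rightarrow> bool) \<Rightarrow> bool" where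
  "hyp_ii M G S Y s s' g t C \<longleftrightarrow>
     cexp M (\<lambda>x. G x = enat g \<and> S x = s) (\<lambda>x. Y t \<infinity> (S x) x - Y (g - 1) \<infinity> (S x) x)
   - cexp M (\<lambda>x. G x = enat g \<and> S x = s') (\<lambda>x. Y t \<infinity> (S x) x - Y (g - 1) \<infinity> (S x) x)
   = cexp M (\<lambda>x. C x \<and> S x = s) (\<lambda>x. Y t \<infinity> (S x) x - Y (g - 1) \<infinity> (S x) x)
   - cexp M (\<lambda>x. C x \<and> S x = s') (\<lambda>x. Y t \<infinity> (S x) x - Y (g - 1) \<infinity> (S x) x)"

end

theory Submission
  imports Defs
begin

text \<open>Under no subgroup selection the counterfactual term of CDATT, computed on the subgroup s,
  may be replaced by the same term on s', which turns CDATT into DATT. For the identification,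
  split the observed change of a treated cohort g into its treatment effect plus its untreated
  trend, using no anticipation at the pre-period g - 1. On a comparison event that only contains
  never-treated units or cohorts treated after t, decompose the integral over the cohorts:
  no anticipation makes every cohort contribute its untreated trend. Parallel trends then
  cancel the untreated trends.\<close>

lemma sets_ev_measurable_pair:
  assumes "G \<in> measurable M (count_space UNIV)" "S \<in> measurable M (count_space UNIV)"
  shows "ev M (\<lambda>x. R (G x) \<and> Q (S x)) \<in> sets M"
proof -
  have "ev M (\<lambda>x. R (G x) \<and> Q (S x)) = (G -` {y. R y} \<inter> space M) \<inter> (S -` {y. Q y} \<inter> space M)"
    unfolding ev_def by auto
  also have "\<dots> \<in> sets M"
    using assms by (intro sets.Int measurable_sets) auto
  finally show ?thesis .
qed

lemma cexp_cong:
  assumes "ev M P \<in> sets M" "\<forall>x\<in>space M. P x \<longrightarrow> Z x = Z' x"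
  shows "cexp M P Z = cexp M P Z'"
  unfolding cexp_def using assms
  by (subst set_lebesgue_integral_cong[of _ M Z Z']) (auto simp: ev_def)

lemma cexp_diff:
  assumes "ev M P \<in> sets M" "integrable M f" "integrable M h"
  shows "cexp M P (\<lambda>x. f x - h x) = cexp M P f - cexp M P h"
proof -
  have "set_integrable M (ev M P) f" "set_integrable M (ev M P) h"
    using integrable_mult_indicator[OF assms(1,2)] integrable_mult_indicator[OF assms(1,3)]
    unfolding set_integrable_def by simp_all
  then show ?thesis
    unfolding cexp_def by (simp add: diff_divide_distrib)
qed

lemma set_integral_measure_zero:
  fixes f :: "'a \<Rightarrow> real"
  assumes "finite_measure M" "A \<in> sets M" "measure M A = 0"
  shows "(LINT x:A|M. f x) = 0"
proof -
  have "A \<in> null_sets M"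
    using assms by (simp add: finite_measure.emeasure_eq_measure null_sets_def)
  then have "AE x in M. indicator A x *\<^sub>R f x = 0"
    by (auto dest: AE_not_in elim!: eventually_mono)
  then show ?thesis
    unfolding set_lebesgue_integral_def by (rule integral_eq_zero_AE)
qed

lemma set_integral_ev_eq_of_cexp_eq:
  assumes "finite_measure M" "ev M P \<in> sets M"
    and "measure M (ev M P) > 0 \<Longrightarrow> cexp M P f = cexp M P h"
  shows "(LINT x:ev M P|M. f x) = (LINT x:ev M P|M. h x)"
proof (cases "measure M (ev M P) > 0")
  case True
  then show ?thesis
    using assms(3) unfolding cexp_def by simp
next
  case False
  then have "measure M (ev M P) = 0"
    using measure_nonneg[of M "ev M P"] by linarith
  then show ?thesis
    using set_integral_measure_zero[OF assms(1,2)] by simp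
qed

lemma set_integral_split_by_value:
  fixes F :: "'c \<Rightarrow> 'a \<Rightarrow> real"
  assumes "E \<in> sets M" "G \<in> measurable M (count_space UNIV)"
    and "finite K" "\<forall>x\<in>E. G x \<in> K" "\<forall>c\<in>K. integrable M (F c)"
  shows "(LINT x:E|M. F (G x) x) = (\<Sum>c\<in>K. LINT x:(E \<inter> (G -` {c} \<inter> space M))|M. F c x)"
proof -
  let ?E = "\<lambda>c. E \<inter> (G -` {c} \<inter> space M)"
  have sets: "?E c \<in> sets M" for c
    using assms(1,2) by (intro sets.Int measurable_sets) auto
  have pointwise: "indicator E x *\<^sub>R F (G x) x = (\<Sum>c\<in>K. indicator (?E c) x *\<^sub>R F c x)"
    if "x \<in> space M" for x
  proof (cases "x \<in> E")
    case True
    then have "(\<Sum>c\<in>K. indicator (?E c) x *\<^sub>R F c x) = (\<Sum>c\<in>K. if c = G x then F c x else 0)"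
      using that by (intro sum.cong) (auto simp: indicator_def)
    also have "\<dots> = F (G x) x"
      using True assms(3,4) by (simp add: sum.delta')
    finally show ?thesis
      using True by simp
  qed (simp add: indicator_def)
  have "(LINT x:E|M. F (G x) x) = integral\<^sup>L M (\<lambda>x. \<Sum>c\<in>K. indicator (?E c) x *\<^sub>R F c x)"
    unfolding set_lebesgue_integral_def by (intro Bochner_Integration.integral_cong refl pointwise)
  also have "\<dots> = (\<Sum>c\<in>K. LINT x|M. indicator (?E c) x *\<^sub>R F c x)"
    using assms(5) sets by (intro Bochner_Integration.integral_sum integrable_mult_indicator) auto
  finally show ?thesis
    unfolding set_lebesgue_integral_def .
qed

lemma cexp_cohort_trend_no_anticipation:
  fixes Y :: "nat \<Rightarrow> enat \<Rightarrow> 's \<Rightarrow> 'a \<Rightarrow> real"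
  assumes "G \<in> measurable M (count_space UNIV)" "S \<in> measurable M (count_space UNIV)"
    and integrable: "\<forall>\<tau> g' \<sigma>. integrable M (Y \<tau> g' \<sigma>)"
    and no_anticipation: "hyp_i M G S Y T"
    and "1 \<le> k" "k \<le> T" "r < k" "\<tau> < k"
    and "measure M (ev M (\<lambda>x. G x = enat k \<and> S x = \<sigma>)) > 0"
  shows "cexp M (\<lambda>x. G x = enat k \<and> S x = \<sigma>) (\<lambda>x. Y r (enat k) \<sigma> x - Y \<tau> (enat k) \<sigma> x)
       = cexp M (\<lambda>x. G x = enat k \<and> S x = \<sigma>) (\<lambda>x. Y r \<infinity> \<sigma> x - Y \<tau> \<infinity> \<sigma> x)"
proof -
  let ?A = "\<lambda>x. G x = enat k \<and> S x = \<sigma>"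
  have A: "ev M ?A \<in> sets M"
    using sets_ev_measurable_pair[OF assms(1,2), of "\<lambda>c. c = enat k" "\<lambda>y. y = \<sigma>"] by simp
  have fix_subgroup: "cexp M ?A (\<lambda>x. Y p d (S x) x) = cexp M ?A (Y p d \<sigma>)" for p d
    using A by (intro cexp_cong) auto
  have "cexp M ?A (\<lambda>x. Y p (enat k) (S x) x) = cexp M ?A (\<lambda>x. Y p \<infinity> (S x) x)" if "p < k" for p
    using no_anticipation assms(5,6,9) that unfolding hyp_i_def by blast
  then have "cexp M ?A (Y p (enat k) \<sigma>) = cexp M ?A (Y p \<infinity> \<sigma>)" if "p < k" for p
    using that fix_subgroup by simp
  then show ?thesis
    using cexp_diff[OF A] integrable assms(7,8) by simp
qed

lemma cexp_obs_trend_comparison: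
  fixes Y :: "nat \<Rightarrow> enat \<Rightarrow> 's \<Rightarrow> 'a \<Rightarrow> real" and D :: "enat \<Rightarrow> bool"
  assumes "finite_measure M"
    and GM: "G \<in> measurable M (count_space UNIV)" and SM: "S \<in> measurable M (count_space UNIV)"
    and cohorts: "\<forall>x\<in>space M. G x = \<infinity> \<or> (\<exists>k. G x = enat k \<and> 1 \<le> k \<and> k \<le> T)"
    and integrable: "\<forall>\<tau> g' \<sigma>. integrable M (Y \<tau> g' \<sigma>)"
    and no_anticipation: "hyp_i M G S Y T"
    and not_yet_treated: "\<forall>c. D c \<longrightarrow> enat t < c"
    and "\<tau> \<le> t"
  shows "cexp M (\<lambda>x. D (G x) \<and> S x = \<sigma>) (\<lambda>x. obsY G S Y t x - obsY G S Y \<tau> x)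
       = cexp M (\<lambda>x. D (G x) \<and> S x = \<sigma>) (\<lambda>x. Y t \<infinity> (S x) x - Y \<tau> \<infinity> (S x) x)"
proof -
  define E where "E = ev M (\<lambda>x. D (G x) \<and> S x = \<sigma>)"
  define K where "K = insert \<infinity> (enat ` {1..T})"
  define F where "F = (\<lambda>c x. Y t c \<sigma> x - Y \<tau> c \<sigma> x)"
  define F' where "F' = (\<lambda>(c::enat) x. Y t \<infinity> \<sigma> x - Y \<tau> \<infinity> \<sigma> x)"
  have E: "E \<in> sets M"
    unfolding E_def using sets_ev_measurable_pair[OF GM SM] .
  have K: "finite K" "\<forall>x\<in>E. G x \<in> K"
    using cohorts unfolding K_def E_def ev_def by auto
  have "\<forall>c\<in>K. integrable M (F c)" "\<forall>c\<in>K. integrable M (F' c)"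
    using integrable unfolding F_def F'_def by auto
  note split = set_integral_split_by_value[OF E GM K this(1)] set_integral_split_by_value[OF E GM K this(2)]
  have cohortwise: "(LINT x:(E \<inter> (G -` {c} \<inter> space M))|M. F c x)
      = (LINT x:(E \<inter> (G -` {c} \<inter> space M))|M. F' c x)" if "c \<in> K" for c
  proof -
    consider "c = \<infinity>" | k where "c = enat k" "1 \<le> k" "k \<le> T" "D c" | "\<not> D c"
      using \<open>c \<in> K\<close> unfolding K_def by (cases "D c") auto
    then show ?thesis
    proof cases
      case (2 k)
      have piece: "E \<inter> (G -` {c} \<inter> space M) = ev M (\<lambda>x. G x = enat k \<and> S x = \<sigma>)"
        using 2 unfolding E_def ev_def by auto
      have "t < k"
        using not_yet_treated 2 by auto
      then have "(LINT x:ev M (\<lambda>x. G x = enat k \<and> S x = \<sigma>)|M. Y t (enat k) \<sigma> x - Y \<tau> (enat k) \<sigma> x)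
          = (LINT x:ev M (\<lambda>x. G x = enat k \<and> S x = \<sigma>)|M. Y t \<infinity> \<sigma> x - Y \<tau> \<infinity> \<sigma> x)"
        using assms(1,8) 2(2-3)
        by (intro set_integral_ev_eq_of_cexp_eq sets_ev_measurable_pair[OF GM SM, of "\<lambda>c. c = enat k", simplified]
            cexp_cohort_trend_no_anticipation[OF GM SM integrable no_anticipation]) auto
      then show ?thesis
        using piece 2(1) by (simp add: F_def F'_def)
    next
      case 3
      then have "E \<inter> (G -` {c} \<inter> space M) = {}"
        unfolding E_def ev_def by auto
      then show ?thesis by (simp add: set_lebesgue_integral_def)
    qed (simp add: F_def F'_def)
  qed
  have "(LINT x:E|M. obsY G S Y t x - obsY G S Y \<tau> x) = (LINT x:E|M. F (G x) x)"
    using E by (intro set_lebesgue_integral_cong) (auto simp: E_def ev_def obsY_def F_def)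
  also have "\<dots> = (\<Sum>c\<in>K. LINT x:(E \<inter> (G -` {c} \<inter> space M))|M. F c x)"
    by (rule split(1))
  also have "\<dots> = (\<Sum>c\<in>K. LINT x:(E \<inter> (G -` {c} \<inter> space M))|M. F' c x)"
    by (rule sum.cong[OF refl cohortwise])
  also have "\<dots> = (LINT x:E|M. F' (G x) x)"
    by (rule split(2)[symmetric])
  also have "\<dots> = (LINT x:E|M. Y t \<infinity> (S x) x - Y \<tau> \<infinity> (S x) x)"
    using E by (intro set_lebesgue_integral_cong) (auto simp: E_def ev_def F'_def)
  finally show ?thesis
    unfolding cexp_def E_def by simp
qed

lemma cexp_obs_trend_treated:
  fixes Y :: "nat \<Rightarrow> enat \<Rightarrow> 's \<Rightarrow> 'a \<Rightarrow> real"
  assumes GM: "G \<in> measurable M (count_space UNIV)" and SM: "S \<in> measurable M (count_space UNIV)"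
    and integrable: "\<forall>\<tau> g' \<sigma>. integrable M (Y \<tau> g' \<sigma>)"
    and no_anticipation: "hyp_i M G S Y T"
    and "1 \<le> g" "g \<le> T"
    and "measure M (ev M (\<lambda>x. G x = enat g \<and> S x = \<sigma>)) > 0"
  shows "cexp M (\<lambda>x. G x = enat g \<and> S x = \<sigma>) (\<lambda>x. obsY G S Y t x - obsY G S Y (g - 1) x)
    = cexp M (\<lambda>x. G x = enat g \<and> S x = \<sigma>) (\<lambda>x. Y t (enat g) (S x) x - Y t \<infinity> (S x) x)
    + cexp M (\<lambda>x. G x = enat g \<and> S x = \<sigma>) (\<lambda>x. Y t \<infinity> (S x) x - Y (g - 1) \<infinity> (S x) x)"
proof -
  let ?A = "\<lambda>x. G x = enat g \<and> S x = \<sigma>"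
  have A: "ev M ?A \<in> sets M"
    using sets_ev_measurable_pair[OF GM SM, of "\<lambda>c. c = enat g" "\<lambda>y. y = \<sigma>"] by simp
  have fix_subgroup: "cexp M ?A (\<lambda>x. Y p d (S x) x - Y q e (S x) x)
      = cexp M ?A (Y p d \<sigma>) - cexp M ?A (Y q e \<sigma>)" for p q d e
  proof -
    have "cexp M ?A (\<lambda>x. Y p d (S x) x - Y q e (S x) x) = cexp M ?A (\<lambda>x. Y p d \<sigma> x - Y q e \<sigma> x)"
      using A by (intro cexp_cong) auto
    then show ?thesis
      using cexp_diff[OF A] integrable by simp
  qed
  have "cexp M ?A (\<lambda>x. obsY G S Y t x - obsY G S Y (g - 1) x)
      = cexp M ?A (\<lambda>x. Y t (enat g) (S x) x - Y (g - 1) (enat g) (S x) x)"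
    using A by (intro cexp_cong) (auto simp: obsY_def)
  moreover have "cexp M ?A (\<lambda>x. Y (g - 1) (enat g) (S x) x) = cexp M ?A (\<lambda>x. Y (g - 1) \<infinity> (S x) x)"
    using no_anticipation assms(5-7) unfolding hyp_i_def by auto
  moreover have "cexp M ?A (\<lambda>x. Y p d (S x) x) = cexp M ?A (Y p d \<sigma>)" for p d
    using A by (intro cexp_cong) auto
  ultimately show ?thesis
    using fix_subgroup by simp
qed

lemma CDATT_eq_DATT_of_no_selection:
  assumes "G \<in> measurable M (count_space UNIV)" "S \<in> measurable M (count_space UNIV)"
    and no_selection:
      "cexp M (\<lambda>x. G x = enat g \<and> S x = s) (\<lambda>x. Y t (enat g) s' x - Y t \<infinity> s' x)
       = cexp M (\<lambda>x. G x = enat g \<and> S x = s') (\<lambda>x. Y t (enat g) s' x - Y t \<infinity> s' x)"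
  shows "CDATT M G S Y s s' g t = DATT M G S Y s s' g t"
proof -
  have "cexp M (\<lambda>x. G x = enat g \<and> S x = \<sigma>) (\<lambda>x. Y t (enat g) (S x) x - Y t \<infinity> (S x) x)
      = cexp M (\<lambda>x. G x = enat g \<and> S x = \<sigma>) (\<lambda>x. Y t (enat g) \<sigma> x - Y t \<infinity> \<sigma> x)" for \<sigma>
    using sets_ev_measurable_pair[OF assms(1,2), of "\<lambda>c. c = enat g" "\<lambda>y. y = \<sigma>"]
    by (intro cexp_cong) auto
  then show ?thesis
    unfolding CDATT_def DATT_def using no_selection by simp
qed

lemma CDATT_eq_DDD:
  fixes Y :: "nat \<Rightarrow> enat \<Rightarrow> 's \<Rightarrow> 'a \<Rightarrow> real" and D :: "enat \<Rightarrow> bool"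
  assumes "finite_measure M"
    and GM: "G \<in> measurable M (count_space UNIV)" and SM: "S \<in> measurable M (count_space UNIV)"
    and cohorts: "\<forall>x\<in>space M. G x = \<infinity> \<or> (\<exists>k. G x = enat k \<and> 1 \<le> k \<and> k \<le> T)"
    and "1 \<le> g" "g \<le> t" "t \<le> T"
    and integrable: "\<forall>\<tau> g' \<sigma>. integrable M (Y \<tau> g' \<sigma>)"
    and "measure M (ev M (\<lambda>x. G x = enat g \<and> S x = s)) > 0"
    and "measure M (ev M (\<lambda>x. G x = enat g \<and> S x = s')) > 0"
    and no_selection:
      "cexp M (\<lambda>x. G x = enat g \<and> S x = s) (\<lambda>x. Y t (enat g) s' x - Y t \<infinity> s' x)
       = cexp M (\<lambda>x. G x = enat g \<and> S x = s') (\<lambda>x. Y t (enat g) s' x - Y t \<infinity> s' x)"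
    and no_anticipation: "hyp_i M G S Y T"
    and parallel_trends: "hyp_ii M G S Y s s' g t (\<lambda>x. D (G x))"
    and not_yet_treated: "\<forall>c. D c \<longrightarrow> enat t < c"
  shows "CDATT M G S Y s s' g t = DDD M G S Y s s' g t (\<lambda>x. D (G x))"
proof -
  have "g \<le> T" "g - 1 \<le> t"
    using assms(6,7) by auto
  note treated = cexp_obs_trend_treated[where t = t, OF GM SM integrable no_anticipation assms(5) this(1)]
  note comparison = cexp_obs_trend_comparison[OF assms(1) GM SM cohorts integrable no_anticipation
      not_yet_treated \<open>g - 1 \<le> t\<close>]
  show ?thesis
    using CDATT_eq_DATT_of_no_selection[where Y = Y, OF GM SM no_selection] parallel_trends
      treated[OF assms(9)] treated[OF assms(10)] comparison[of s] comparison[of s']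
    unfolding DDD_def DATT_def hyp_ii_def by linarith
qed

theorem proposition2:
  fixes M :: "'a measure" and G :: "'a \<Rightarrow> enat" and S :: "'a \<Rightarrow> 's"
    and Y :: "nat \<Rightarrow> enat \<Rightarrow> 's \<Rightarrow> 'a \<Rightarrow> real"
    and \<S> :: "'s set" and T g t :: nat and s s' :: 's
  assumes "prob_space M"
    and "finite \<S>"
    and "G \<in> measurable M (count_space UNIV)"
    and "S \<in> measurable M (count_space UNIV)"
    and "\<forall>x\<in>space M. G x = \<infinity> \<or> (\<exists>k. G x = enat k \<and> 1 \<le> k \<and> k \<le> T)"
    and "\<forall>x\<in>space M. S x \<in> \<S>"
    and "s \<in> \<S>" and "s' \<in> \<S>" and "s \<noteq> s'"
    and "1 \<le> g" and "g \<le> t" and "t \<le> T"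
    and "\<forall>\<tau> g' \<sigma>. integrable M (Y \<tau> g' \<sigma>)"
    and "measure M (ev M (\<lambda>x. G x = enat g \<and> S x = s)) > 0"
    and "measure M (ev M (\<lambda>x. G x = enat g \<and> S x = s')) > 0"
    and no_selection:
      "cexp M (\<lambda>x. G x = enat g \<and> S x = s) (\<lambda>x. Y t (enat g) s' x - Y t \<infinity> s' x)
       = cexp M (\<lambda>x. G x = enat g \<and> S x = s') (\<lambda>x. Y t (enat g) s' x - Y t \<infinity> s' x)"
  shows "CDATT M G S Y s s' g t = DATT M G S Y s s' g t
    \<and> ((measure M (ev M (\<lambda>x. G x > enat t \<and> S x = s)) > 0
         \<and> measure M (ev M (\<lambda>x. G x > enat t \<and> S x = s')) > 0
         \<and> hyp_i M G S Y T \<and> hyp_ii M G S Y s s' g t (\<lambda>x. G x > enat t))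
        \<longrightarrow> CDATT M G S Y s s' g t = DDD M G S Y s s' g t (\<lambda>x. G x > enat t))
    \<and> ((measure M (ev M (\<lambda>x. G x = \<infinity> \<and> S x = s)) > 0
         \<and> measure M (ev M (\<lambda>x. G x = \<infinity> \<and> S x = s')) > 0
         \<and> hyp_i M G S Y T \<and> hyp_ii M G S Y s s' g t (\<lambda>x. G x = \<infinity>))
        \<longrightarrow> CDATT M G S Y s s' g t = DDD M G S Y s s' g t (\<lambda>x. G x = \<infinity>))"
proof -
  have finite: "finite_measure M"
    using assms(1) by (rule prob_space.finite_measure)
  note identification = CDATT_eq_DDD[OF finite assms(3,4,5,10-12,13-15) no_selection]
  have "CDATT M G S Y s s' g t = DDD M G S Y s s' g t (\<lambda>x. G x > enat t)"
    if "hyp_i M G S Y T" "hyp_ii M G S Y s s' g t (\<lambda>x. G x > enat t)"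
    using identification[of "\<lambda>c. enat t < c"] that by simp
  moreover have "CDATT M G S Y s s' g t = DDD M G S Y s s' g t (\<lambda>x. G x = \<infinity>)"
    if "hyp_i M G S Y T" "hyp_ii M G S Y s s' g t (\<lambda>x. G x = \<infinity>)"
    using identification[of "\<lambda>c. c = \<infinity>"] that by simp
  ultimately show ?thesis
    using CDATT_eq_DATT_of_no_selection[where Y = Y, OF assms(3,4) no_selection] by blast
qed

end
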